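(* Suppose outcomes are observed under a balanced $K$-cluster randomized design $\mathcal{D}(\mathcal{C})$ and the potential outcomes have the form $Y_i(\mathbf{Z})=g_i(Z_i,e_i(\mathbf{Z}))$, where for each $i$ and each $Z\in\{-1,1\}$ the function $e\mapsto g_i(Z,e)$ is $L$-Lipschitz on $[-1,1]$ (with $L>0$). Then $$\left|\mathbb{E}[\widehat\tau_{DIM}]-\tau^*\right|\le \frac{2}{N}\cdot\frac{K}{K-1}\,L\,\mathcal{H}(\mathcal{C}),$$ where $\tau^*=\frac1N\sum_{i}\big(g_i(1,1)-g_i(-1,-1)\big)$. Furthermore, this bound is attained (by $g_i(Z,e)=Le$ for all $i$), and consequently, among all partitions of $[N]$ into $K$ equally sized clusters (with $K,K_T$ fixed), the set of minimizers of $\max_{\{g_i\}}\left|\mathbb{E}[\widehat\tau_{DIM}]-\tau^*\right|$, the maximum taken over all families $\{g_i\}$ of functions that are $L$-Lipschitz in $e$, equals the set of minimizers of $\mathcal{H}(\mathcal{C})$.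
   Context: Setting: $N$ experimental units $[N]$, $M$ interference units $[M]$, weights $w_{is}\ge0$ with $\sum_s w_{is}>0$ for all $i$ and $\sum_i w_{is}>0$ for all $s$. For $\mathbf{Z}\in\{-1,1\}^N$: dose $d_s=\frac{\sum_i w_{is}Z_i}{\sum_i w_{is}}$, exposure $e_i(\mathbf{Z})=\frac{\sum_s w_{is}d_s}{\sum_s w_{is}}\in[-1,1]$. Balanced $K$-cluster randomized design $\mathcal{D}(\mathcal{C})$: $K\ge2$ divides $N$, $\mathcal{C}$ partitions $[N]$ into $K$ clusters of size $N/K$, $\mathcal{C}(i)$ is the cluster of $i$; $K_T$ clusters ($0<K_T<K$) chosen uniformly at random are treated ($Z_i=1$), the rest are control ($Z_i=-1$). $N_T=NK_T/K$, $N_C=N-N_T$; $\widehat\tau_{DIM}=\frac{1}{N_T}\sum_{i:Z_i=1}Y_i-\frac{1}{N_C}\sum_{i:Z_i=-1}Y_i$. $\mathcal{H}(\mathcal{C})=\sum_{i\in[N]}\sum_{j\in[N]\setminus\mathcal{C}(i)}\sum_{s\in[M]}\frac{w_{is}}{\sum_{s'} w_{is'}}\frac{w_{js}}{\sum_{k} w_{ks}}$. *)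

theory Defs
  imports "HOL-Analysis.Analysis" "HOL-Library.Disjoint_Sets"
begin

text \<open>Experimental units are 0..<N, interference units 0..<M; weights w i s.
  Treatment vectors Z :: nat \<Rightarrow> real take values in {-1,1}.\<close>

definition dose :: "(nat \<Rightarrow> nat \<Rightarrow> real) \<Rightarrow> nat \<Rightarrow> (nat \<Rightarrow> real) \<Rightarrow> nat \<Rightarrow> real" where
  "dose w N Z s = (\<Sum>i<N. w i s * Z i) / (\<Sum>i<N. w i s)"

definition exposure :: "(nat \<Rightarrow> nat \<Rightarrow> real) \<Rightarrow> nat \<Rightarrow> nat \<Rightarrow> (nat \<Rightarrow> real) \<Rightarrow> nat \<Rightarrow> real" where
  "exposure w N M Z i = (\<Sum>s<M. w i s * dose w N Z s) / (\<Sum>s<M. w i s)"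

definition balanced_partition :: "nat \<Rightarrow> nat \<Rightarrow> nat set set \<Rightarrow> bool" where
  "balanced_partition N K C \<longleftrightarrow>
     partition_on {0..<N} C \<and> card C = K \<and> (\<forall>B\<in>C. card B = N div K)"

definition cluster_of :: "nat set set \<Rightarrow> nat \<Rightarrow> nat set" where
  "cluster_of C i = (THE B. B \<in> C \<and> i \<in> B)"

definition assign :: "nat set set \<Rightarrow> nat \<Rightarrow> real" where
  "assign T i = (if i \<in> \<Union>T then 1 else -1)"

definition dim_est :: "nat \<Rightarrow> nat \<Rightarrow> nat \<Rightarrow> (nat \<Rightarrow> real) \<Rightarrow> (nat \<Rightarrow> real) \<Rightarrow> real" where
  "dim_est N K KT Z Y =
     (let NT = real N * real KT / real K; NC = real N - NT in
       (\<Sum>i\<in>{i. i < N \<and> Z i = 1}. Y i) / NT - (\<Sum>i\<in>{i. i < N \<and> Z i = -1}. Y i) / NC)"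

definition outcomes :: "(nat \<Rightarrow> nat \<Rightarrow> real) \<Rightarrow> nat \<Rightarrow> nat \<Rightarrow> (nat \<Rightarrow> real \<Rightarrow> real \<Rightarrow> real)
     \<Rightarrow> (nat \<Rightarrow> real) \<Rightarrow> nat \<Rightarrow> real" where
  "outcomes w N M g Z i = g i (Z i) (exposure w N M Z i)"

definition expected_dim ::
  "(nat \<Rightarrow> nat \<Rightarrow> real) \<Rightarrow> nat \<Rightarrow> nat \<Rightarrow> nat \<Rightarrow> nat \<Rightarrow> nat set set
     \<Rightarrow> (nat \<Rightarrow> real \<Rightarrow> real \<Rightarrow> real) \<Rightarrow> real" where
  "expected_dim w N M K KT C g =
     (\<Sum>T\<in>{T. T \<subseteq> C \<and> card T = KT}. dim_est N K KT (assign T) (outcomes w N M g (assign T)))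
       / real (card {T. T \<subseteq> C \<and> card T = KT})"

definition tau_star :: "nat \<Rightarrow> (nat \<Rightarrow> real \<Rightarrow> real \<Rightarrow> real) \<Rightarrow> real" where
  "tau_star N g = (1 / real N) * (\<Sum>i<N. g i 1 1 - g i (-1) (-1))"

definition bias ::
  "(nat \<Rightarrow> nat \<Rightarrow> real) \<Rightarrow> nat \<Rightarrow> nat \<Rightarrow> nat \<Rightarrow> nat \<Rightarrow> nat set set
     \<Rightarrow> (nat \<Rightarrow> real \<Rightarrow> real \<Rightarrow> real) \<Rightarrow> real" where
  "bias w N M K KT C g = \<bar>expected_dim w N M K KT C g - tau_star N g\<bar>"

definition lip_family :: "nat \<Rightarrow> real \<Rightarrow> (nat \<Rightarrow> real \<Rightarrow> real \<Rightarrow> real) \<Rightarrow> bool" where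
  "lip_family N L g \<longleftrightarrow> (\<forall>i<N. \<forall>z\<in>{-1, 1}. L-lipschitz_on {-1..1} (g i z))"

definition worst_bias ::
  "(nat \<Rightarrow> nat \<Rightarrow> real) \<Rightarrow> nat \<Rightarrow> nat \<Rightarrow> nat \<Rightarrow> nat \<Rightarrow> real \<Rightarrow> nat set set \<Rightarrow> real" where
  "worst_bias w N M K KT L C = (SUP g\<in>{g. lip_family N L g}. bias w N M K KT C g)"

definition H :: "(nat \<Rightarrow> nat \<Rightarrow> real) \<Rightarrow> nat \<Rightarrow> nat \<Rightarrow> nat set set \<Rightarrow> real" where
  "H w N M C = (\<Sum>i<N. \<Sum>j\<in>{0..<N} - cluster_of C i. \<Sum>s<M.
       (w i s / (\<Sum>s'<M. w i s')) * (w j s / (\<Sum>k<N. w k s)))"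

end

theory Submission
  imports Defs
begin

text \<open>The exposure is an average \<open>e\<^sub>i = \<Sum>\<^sub>j a\<^sub>i\<^sub>j Z\<^sub>j\<close> with nonnegative weights summing to one.
  Since every unit is treated with probability \<open>K\<^sub>T/K\<close>, the expected difference in means is
  \<open>(1/N) \<Sum>\<^sub>i (E[Y\<^sub>i | Z\<^sub>i = 1] - E[Y\<^sub>i | Z\<^sub>i = -1])\<close>, so the bias is an average of
  \<open>E[g\<^sub>i(1,e\<^sub>i) - g\<^sub>i(1,1) | Z\<^sub>i = 1] - E[g\<^sub>i(-1,e\<^sub>i) - g\<^sub>i(-1,-1) | Z\<^sub>i = -1]\<close>.
  By the Lipschitz condition these terms are at most \<open>L E[1 - e\<^sub>i | Z\<^sub>i = 1]\<close> and
  \<open>L E[1 + e\<^sub>i | Z\<^sub>i = -1]\<close>, which are linear in the \<open>Z\<^sub>j\<close>: units of the cluster of \<open>i\<close>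
  contribute nothing, and a unit of another cluster disagrees with \<open>i\<close> with conditional probability
  \<open>(K - K\<^sub>T)/(K - 1)\<close>, resp. \<open>K\<^sub>T/(K - 1)\<close>. Together this gives \<open>2K/(K - 1)\<close> times the weight
  \<open>i\<close> receives from outside its cluster, and these weights sum to \<open>H(C)\<close>. For \<open>g\<^sub>i(z,e) = L e\<close>
  every inequality is an equality, so the worst-case bias is a fixed positive multiple of \<open>H(C)\<close>.\<close>

lemma card_subsets_containing:
  assumes "finite C" "B \<in> C" "0 < k"
  shows "card {T. T \<subseteq> C \<and> card T = k \<and> B \<in> T} = (card C - 1) choose (k - 1)"
proof -
  have "{T. T \<subseteq> C \<and> card T = k \<and> B \<in> T} = insert B ` {U. U \<subseteq> C - {B} \<and> card U = k - 1}"
  proof (intro set_eqI iffI)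
    fix T assume T: "T \<in> {T. T \<subseteq> C \<and> card T = k \<and> B \<in> T}"
    then have "finite T" using assms(1) finite_subset by blast
    with T show "T \<in> insert B ` {U. U \<subseteq> C - {B} \<and> card U = k - 1}"
      by (intro image_eqI[of _ _ "T - {B}"]) auto
  next
    fix T assume "T \<in> insert B ` {U. U \<subseteq> C - {B} \<and> card U = k - 1}"
    then obtain U where U: "U \<subseteq> C - {B}" "card U = k - 1" "T = insert B U" by blast
    moreover have "finite U" "B \<notin> U" using U(1) assms(1) finite_subset by auto
    ultimately show "T \<in> {T. T \<subseteq> C \<and> card T = k \<and> B \<in> T}" using assms(2,3) by auto
  qed
  moreover have "inj_on (insert B) {U. U \<subseteq> C - {B} \<and> card U = k - 1}"
    by (rule inj_onI) (metis Diff_insert_absorb insert_subset mem_Collect_eq subset_Diff_insert)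
  ultimately show ?thesis
    using assms(1,2) by (simp add: card_image n_subsets)
qed

lemma card_subsets_omitting:
  assumes "finite C" "B \<in> C"
  shows "card {T. T \<subseteq> C \<and> card T = k \<and> B \<notin> T} = (card C - 1) choose k"
proof -
  have "{T. T \<subseteq> C \<and> card T = k \<and> B \<notin> T} = {T. T \<subseteq> C - {B} \<and> card T = k}" by auto
  then show ?thesis using assms by (simp add: n_subsets)
qed

lemma card_subsets_containing_omitting:
  assumes "finite C" "B \<in> C" "B' \<in> C" "B \<noteq> B'" "0 < k"
  shows "card {T. T \<subseteq> C \<and> card T = k \<and> B \<in> T \<and> B' \<notin> T} = (card C - 2) choose (k - 1)"
proof -
  have "{T. T \<subseteq> C \<and> card T = k \<and> B \<in> T \<and> B' \<notin> T} = {T. T \<subseteq> C - {B'} \<and> card T = k \<and> B \<in> T}"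
    by blast
  moreover have "card (C - {B'}) - 1 = card C - 2" using assms(1,3) by simp
  ultimately show ?thesis
    using card_subsets_containing[of "C - {B'}" B k] assms by simp
qed

lemma binomial_ratio_sum:
  assumes "0 < k" "k < n"
  shows "real ((n - 2) choose (k - 1)) / real ((n - 1) choose (k - 1))
       + real ((n - 2) choose (k - 1)) / real ((n - 1) choose k) = real n / (real n - 1)"
proof -
  have n1: "real (n - 1) = real n - 1" using assms by simp
  have pos: "real n - 1 > 0" "real ((n - 1) choose (k - 1)) > 0" "real ((n - 1) choose k) > 0"
    using assms by auto
  have "(n - k) * ((n - 1) choose (k - 1)) = (n - 1) * ((n - 2) choose (k - 1))"
    using binomial_absorb_comp[of "n - 1" "k - 1"] assms(1) by (simp add: diff_diff_add numeral_2_eq_2)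
  then have "real (n - k) * real ((n - 1) choose (k - 1)) = (real n - 1) * real ((n - 2) choose (k - 1))"
    unfolding n1[symmetric] of_nat_mult[symmetric] by (rule arg_cong)
  then have first: "real ((n - 2) choose (k - 1)) / real ((n - 1) choose (k - 1)) = real (n - k) / (real n - 1)"
    using pos by (simp add: field_simps del: of_nat_diff)
  have "k * ((n - 1) choose k) = (n - 1) * ((n - 2) choose (k - 1))"
    using times_binomial_minus1_eq[OF assms(1), of "n - 1"] by (simp add: diff_diff_add numeral_2_eq_2)
  then have "real k * real ((n - 1) choose k) = (real n - 1) * real ((n - 2) choose (k - 1))"
    unfolding n1[symmetric] of_nat_mult[symmetric] by (rule arg_cong)
  then have second: "real ((n - 2) choose (k - 1)) / real ((n - 1) choose k) = real k / (real n - 1)"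
    using pos by (simp add: field_simps)
  show ?thesis
    unfolding first second using assms by (simp add: of_nat_diff add_divide_distrib[symmetric])
qed

lemma cluster_of_eq:
  assumes "partition_on A C" "B \<in> C" "i \<in> B"
  shows "cluster_of C i = B"
  unfolding cluster_of_def
proof (rule the_equality)
  fix B' assume "B' \<in> C \<and> i \<in> B'"
  then show "B' = B" using assms disjointD[OF partition_onD2[OF assms(1)]] by blast
qed (use assms in blast)

lemma cluster_of_mem:
  assumes "partition_on A C" "i \<in> A"
  shows "cluster_of C i \<in> C" "i \<in> cluster_of C i"
proof -
  obtain B where B: "B \<in> C" "i \<in> B" using partition_onD1[OF assms(1)] assms(2) by blast
  then have "cluster_of C i = B" by (rule cluster_of_eq[OF assms(1)])
  with B show "cluster_of C i \<in> C" "i \<in> cluster_of C i" by simp_all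
qed

lemma cluster_of_eq_iff:
  assumes "partition_on A C" "i \<in> A" "j \<in> A"
  shows "cluster_of C j = cluster_of C i \<longleftrightarrow> j \<in> cluster_of C i"
  using cluster_of_eq[OF assms(1) cluster_of_mem(1)[OF assms(1,2)]] cluster_of_mem(2)[OF assms(1,3)] by metis

lemma assign_eq_cluster_of:
  assumes "partition_on A C" "T \<subseteq> C" "i \<in> A"
  shows "assign T i = (if cluster_of C i \<in> T then 1 else -1)"
proof -
  have "i \<in> \<Union>T \<longleftrightarrow> cluster_of C i \<in> T"
  proof
    assume "i \<in> \<Union>T"
    then obtain B where "B \<in> T" "i \<in> B" by blast
    with assms(2) show "cluster_of C i \<in> T" using cluster_of_eq[OF assms(1), of B i] by auto
  qed (use cluster_of_mem(2)[OF assms(1,3)] in blast)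
  then show ?thesis unfolding assign_def by simp
qed

definition exposure_weight :: "(nat \<Rightarrow> nat \<Rightarrow> real) \<Rightarrow> nat \<Rightarrow> nat \<Rightarrow> nat \<Rightarrow> nat \<Rightarrow> real" where
  "exposure_weight w N M i j = (\<Sum>s<M. (w i s / (\<Sum>s'<M. w i s')) * (w j s / (\<Sum>k<N. w k s)))"

lemma exposure_eq_weighted_sum: "exposure w N M Z i = (\<Sum>j<N. exposure_weight w N M i j * Z j)"
proof -
  have "exposure w N M Z i = (\<Sum>s<M. \<Sum>j<N. (w i s / (\<Sum>s'<M. w i s')) * (w j s / (\<Sum>k<N. w k s)) * Z j)"
    unfolding exposure_def dose_def sum_divide_distrib
    by (intro sum.cong) (simp_all add: sum_distrib_left sum_divide_distrib algebra_simps)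
  also have "\<dots> = (\<Sum>j<N. exposure_weight w N M i j * Z j)"
    unfolding exposure_weight_def by (subst sum.swap) (simp add: sum_distrib_right)
  finally show ?thesis .
qed

lemma sum_exposure_weight:
  assumes "(\<Sum>s<M. w i s) > 0" "\<forall>s<M. (\<Sum>k<N. w k s) > 0"
  shows "(\<Sum>j<N. exposure_weight w N M i j) = 1"
proof -
  have "(\<Sum>j<N. exposure_weight w N M i j)
      = (\<Sum>s<M. (w i s / (\<Sum>s'<M. w i s')) * ((\<Sum>j<N. w j s) / (\<Sum>k<N. w k s)))"
    unfolding exposure_weight_def
    by (subst sum.swap) (simp only: sum_distrib_left[symmetric] sum_divide_distrib[symmetric])
  also have "\<dots> = (\<Sum>s<M. w i s / (\<Sum>s'<M. w i s'))"
    using assms(2) by (intro sum.cong) auto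
  also have "\<dots> = (\<Sum>s<M. w i s) / (\<Sum>s'<M. w i s')"
    by (rule sum_divide_distrib[symmetric])
  finally show ?thesis using assms(1) by simp
qed

lemma exposure_weight_nonneg:
  assumes "\<forall>i<N. \<forall>s<M. 0 \<le> w i s" "i < N" "j < N"
  shows "0 \<le> exposure_weight w N M i j"
  unfolding exposure_weight_def using assms
  by (intro sum_nonneg mult_nonneg_nonneg divide_nonneg_nonneg sum_nonneg) auto

lemma one_minus_sign_times_exposure:
  assumes "(\<Sum>j<N. exposure_weight w N M i j) = 1"
  shows "1 - z * exposure w N M Z i = (\<Sum>j<N. exposure_weight w N M i j * (1 - z * Z j))"
  using assms by (simp add: exposure_eq_weighted_sum right_diff_distrib sum_subtractf sum_distrib_left algebra_simps)

lemma exposure_mem_interval: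
  assumes "\<forall>i<N. \<forall>s<M. 0 \<le> w i s" "i < N" "(\<Sum>j<N. exposure_weight w N M i j) = 1"
    and "\<forall>j<N. Z j \<in> {-1, 1}"
  shows "exposure w N M Z i \<in> {-1..1}"
proof -
  have "0 \<le> 1 - z * exposure w N M Z i" if "z \<in> {-1, 1}" for z :: real
    unfolding one_minus_sign_times_exposure[OF assms(3)]
    using exposure_weight_nonneg[OF assms(1,2)] assms(4) that
    by (intro sum_nonneg mult_nonneg_nonneg) auto
  from this[of 1] this[of "-1"] show ?thesis by simp
qed

lemma abs_diff_sign:
  fixes z e :: real
  assumes "z \<in> {-1, 1}" "e \<in> {-1..1}"
  shows "\<bar>e - z\<bar> = 1 - z * e"
  using assms by auto

lemma sign_gap:
  fixes y z :: real
  assumes "y \<in> {-1, 1}" "z \<in> {-1, 1}"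
  shows "1 - z * y = (if y = z then 0 else 2)"
  using assms by auto

lemma lip_family_linear: "0 \<le> L \<Longrightarrow> lip_family N L (\<lambda>i z e. L * e)"
  unfolding lip_family_def
  by (auto intro!: lipschitz_onI simp: dist_real_def abs_mult simp flip: right_diff_distrib)

locale cluster_design =
  fixes w :: "nat \<Rightarrow> nat \<Rightarrow> real" and N M K KT :: nat and C :: "nat set set"
  assumes partition: "partition_on {0..<N} C" and card_clusters: "card C = K"
    and treated_pos: "0 < KT" and treated_less: "KT < K"
    and weights_nonneg: "\<forall>i<N. \<forall>s<M. 0 \<le> w i s"
    and unit_weights_pos: "\<forall>i<N. (\<Sum>s<M. w i s) > 0"
    and interference_weights_pos: "\<forall>s<M. (\<Sum>i<N. w i s) > 0"
begin

text \<open>The design draws \<open>T\<close> uniformly from \<open>assignments\<close>; \<open>arm i z\<close> is the event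
  \<open>Z\<^sub>i = z\<close> and \<open>arm_mean i z f\<close> the conditional expectation \<open>E[f | Z\<^sub>i = z]\<close>.\<close>

definition assignments :: "nat set set set" where
  "assignments = {T. T \<subseteq> C \<and> card T = KT}"

definition arm :: "nat \<Rightarrow> real \<Rightarrow> nat set set set" where
  "arm i z = {T \<in> assignments. assign T i = z}"

definition arm_mean :: "nat \<Rightarrow> real \<Rightarrow> (nat set set \<Rightarrow> real) \<Rightarrow> real" where
  "arm_mean i z f = (\<Sum>T\<in>arm i z. f T) / real (card (arm i z))"

definition outside_weight :: "nat \<Rightarrow> real" where
  "outside_weight i = (\<Sum>j\<in>{0..<N} - cluster_of C i. exposure_weight w N M i j)"

lemma finite_clusters: "finite C"
  using card_clusters treated_less card.infinite by fastforce

lemma finite_assignments: "finite assignments"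
  unfolding assignments_def using finite_clusters by (simp add: finite_subset[of _ "Pow C"] subset_eq)

lemma finite_arm: "finite (arm i z)"
  unfolding arm_def using finite_assignments by simp

lemma card_assignments: "card assignments = K choose KT"
  unfolding assignments_def using n_subsets[OF finite_clusters] card_clusters by simp

lemma assign_eq_in_assignments:
  "T \<in> assignments \<Longrightarrow> j < N \<Longrightarrow> assign T j = (if cluster_of C j \<in> T then 1 else -1)"
  unfolding assignments_def by (intro assign_eq_cluster_of[OF partition]) auto

lemma card_arm_treated:
  assumes "i < N"
  shows "card (arm i 1) = (K - 1) choose (KT - 1)"
proof -
  have "arm i 1 = {T. T \<subseteq> C \<and> card T = KT \<and> cluster_of C i \<in> T}"
    unfolding arm_def using assign_eq_in_assignments[OF _ assms] by (auto simp: assignments_def split: if_splits)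
  then show ?thesis
    using card_subsets_containing[OF finite_clusters cluster_of_mem(1)[OF partition] treated_pos] assms card_clusters
    by simp
qed

lemma card_arm_control:
  assumes "i < N"
  shows "card (arm i (-1)) = (K - 1) choose KT"
proof -
  have "arm i (-1) = {T. T \<subseteq> C \<and> card T = KT \<and> cluster_of C i \<notin> T}"
    unfolding arm_def using assign_eq_in_assignments[OF _ assms] by (auto simp: assignments_def split: if_splits)
  then show ?thesis
    using card_subsets_omitting[OF finite_clusters cluster_of_mem(1)[OF partition]] assms card_clusters
    by simp
qed

lemma card_arm_pos: "i < N \<Longrightarrow> z \<in> {-1, 1} \<Longrightarrow> 0 < card (arm i z)"
  using card_arm_treated card_arm_control treated_less by auto

lemma card_arm_treated_ratio:
  "i < N \<Longrightarrow> real (card (arm i 1)) * real K = real (card assignments) * real KT"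
  unfolding card_arm_treated card_assignments
  using times_binomial_minus1_eq[OF treated_pos, of K] by (metis mult.commute of_nat_mult)

lemma card_arm_control_ratio:
  "i < N \<Longrightarrow> real (card (arm i (-1))) * real K = real (card assignments) * real (K - KT)"
  unfolding card_arm_control card_assignments
  using binomial_absorb_comp[of K KT] by (metis mult.commute of_nat_mult)

lemma card_arm_switched:
  assumes "i < N" "j < N" "j \<notin> cluster_of C i" "z \<in> {-1, 1}"
  shows "card {T \<in> arm i z. assign T j \<noteq> z} = (K - 2) choose (KT - 1)"
proof -
  have ij: "cluster_of C i \<noteq> cluster_of C j"
    using cluster_of_eq_iff[OF partition, of i j] assms(1-3) by auto
  have mem: "cluster_of C i \<in> C" "cluster_of C j \<in> C"
    using cluster_of_mem(1)[OF partition] assms(1,2) by auto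
  note assign = assign_eq_in_assignments[OF _ assms(1)] assign_eq_in_assignments[OF _ assms(2)]
  from assms(4) consider "z = 1" | "z = -1" by blast
  then show ?thesis
  proof cases
    case 1
    then have "{T \<in> arm i z. assign T j \<noteq> z}
        = {T. T \<subseteq> C \<and> card T = KT \<and> cluster_of C i \<in> T \<and> cluster_of C j \<notin> T}"
      unfolding arm_def using assign by (auto simp: assignments_def split: if_splits)
    then show ?thesis
      using card_subsets_containing_omitting[OF finite_clusters mem ij treated_pos] card_clusters by simp
  next
    case 2
    then have "{T \<in> arm i z. assign T j \<noteq> z}
        = {T. T \<subseteq> C \<and> card T = KT \<and> cluster_of C j \<in> T \<and> cluster_of C i \<notin> T}"
      unfolding arm_def using assign by (auto simp: assignments_def split: if_splits)
    then show ?thesis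
      using card_subsets_containing_omitting[OF finite_clusters mem(2,1) ij[symmetric] treated_pos]
        card_clusters by simp
  qed
qed

lemma sum_arm_sign_gap:
  assumes i: "i < N" and z: "z \<in> {-1, 1}"
  shows "(\<Sum>T\<in>arm i z. 1 - z * exposure w N M (assign T) i)
       = 2 * real ((K - 2) choose (KT - 1)) * outside_weight i"
proof -
  let ?a = "exposure_weight w N M i" and ?c = "2 * real ((K - 2) choose (KT - 1))"
  have gap: "(\<Sum>T\<in>arm i z. 1 - z * assign T j) = (if j \<in> cluster_of C i then 0 else ?c)"
    if j: "j < N" for j
  proof -
    have "(\<Sum>T\<in>arm i z. 1 - z * assign T j) = (\<Sum>T\<in>arm i z. if assign T j = z then 0 else 2)"
      using z by (intro sum.cong refl sign_gap) (auto simp: assign_def)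
    also have "\<dots> = 2 * real (card {T \<in> arm i z. assign T j \<noteq> z})"
      using finite_arm by (simp add: sum.If_cases Int_def)
    also have "\<dots> = (if j \<in> cluster_of C i then 0 else ?c)"
    proof (cases "j \<in> cluster_of C i")
      case True
      then have "cluster_of C j = cluster_of C i" using cluster_of_eq_iff[OF partition, of i j] i j by simp
      then have none: "{T \<in> arm i z. assign T j \<noteq> z} = {}"
        using assign_eq_in_assignments i j unfolding arm_def by auto
      show ?thesis using True by (simp add: none)
    qed (use card_arm_switched[OF i j _ z] in simp)
    finally show ?thesis .
  qed
  have "(\<Sum>T\<in>arm i z. 1 - z * exposure w N M (assign T) i)
      = (\<Sum>T\<in>arm i z. \<Sum>j<N. ?a j * (1 - z * assign T j))"
    using one_minus_sign_times_exposure[OF sum_exposure_weight] unit_weights_pos interference_weights_pos i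
    by simp
  also have "\<dots> = (\<Sum>j<N. ?a j * (\<Sum>T\<in>arm i z. 1 - z * assign T j))"
    by (subst sum.swap) (simp add: sum_distrib_left)
  also have "\<dots> = (\<Sum>j<N. if j \<in> cluster_of C i then 0 else ?c * ?a j)"
    using gap by (intro sum.cong) auto
  also have "\<dots> = ?c * outside_weight i"
    unfolding outside_weight_def
    by (simp add: sum.If_cases lessThan_atLeast0 Diff_eq sum_distrib_left)
  finally show ?thesis .
qed

lemma arm_mean_sign_gap_sum:
  assumes "i < N"
  shows "arm_mean i 1 (\<lambda>T. 1 - exposure w N M (assign T) i)
       + arm_mean i (-1) (\<lambda>T. 1 + exposure w N M (assign T) i)
       = 2 * (real K / (real K - 1)) * outside_weight i"
proof -
  have "arm_mean i 1 (\<lambda>T. 1 - exposure w N M (assign T) i)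
      + arm_mean i (-1) (\<lambda>T. 1 + exposure w N M (assign T) i)
      = 2 * outside_weight i * (real ((K - 2) choose (KT - 1)) / real ((K - 1) choose (KT - 1))
         + real ((K - 2) choose (KT - 1)) / real ((K - 1) choose KT))"
    using sum_arm_sign_gap[OF assms, of 1] sum_arm_sign_gap[OF assms, of "-1"]
    unfolding arm_mean_def card_arm_treated[OF assms] card_arm_control[OF assms]
    by (simp add: field_simps)
  then show ?thesis
    unfolding binomial_ratio_sum[OF treated_pos treated_less] by simp
qed

lemma arm_mean_const_diff:
  "i < N \<Longrightarrow> z \<in> {-1, 1} \<Longrightarrow> arm_mean i z (\<lambda>T. f T - c) = arm_mean i z f - c"
  using card_arm_pos[of i z] unfolding arm_mean_def by (simp add: sum_subtractf diff_divide_distrib)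

lemma arm_mean_scale: "arm_mean i z (\<lambda>T. c * f T) = c * arm_mean i z f"
  unfolding arm_mean_def by (simp add: sum_distrib_left)

lemma arm_mean_abs_le: "\<bar>arm_mean i z f\<bar> \<le> arm_mean i z (\<lambda>T. \<bar>f T\<bar>)"
  unfolding arm_mean_def abs_divide by (simp add: divide_right_mono sum_abs)

lemma arm_mean_mono: "(\<And>T. T \<in> arm i z \<Longrightarrow> f T \<le> f' T) \<Longrightarrow> arm_mean i z f \<le> arm_mean i z f'"
  unfolding arm_mean_def by (simp add: divide_right_mono sum_mono)

lemma sum_assignments_filter:
  "(\<Sum>T\<in>assignments. if assign T i = z then f T else 0) = (\<Sum>T\<in>arm i z. f T)"
  unfolding arm_def by (simp add: sum.inter_filter[OF finite_assignments])

lemma arm_sum_div_group_size: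
  assumes "i < N"
  shows "(\<Sum>T\<in>arm i 1. f T) / (real N * real KT / real K)
           = real (card assignments) * arm_mean i 1 f / real N"
    and "(\<Sum>T\<in>arm i (-1). f T) / (real N - real N * real KT / real K)
           = real (card assignments) * arm_mean i (-1) f / real N"
proof -
  have pos: "0 < real N" "0 < real K" "0 < real KT" "real KT < real K" "0 < real (card assignments)"
    using assms treated_pos treated_less card_assignments by auto
  have treated: "real (card (arm i 1)) = real (card assignments) * real KT / real K"
    using card_arm_treated_ratio[OF assms] pos by (simp add: field_simps)
  show "(\<Sum>T\<in>arm i 1. f T) / (real N * real KT / real K)
      = real (card assignments) * arm_mean i 1 f / real N"
    using card_arm_pos[OF assms, of 1] pos unfolding arm_mean_def treated by (simp add: field_simps)
  have control: "real (card (arm i (-1))) = real (card assignments) * (real K - real KT) / real K"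
    using card_arm_control_ratio[OF assms] pos treated_less by (simp add: field_simps of_nat_diff)
  show "(\<Sum>T\<in>arm i (-1). f T) / (real N - real N * real KT / real K)
      = real (card assignments) * arm_mean i (-1) f / real N"
    using card_arm_pos[OF assms, of "-1"] pos unfolding arm_mean_def control by (simp add: field_simps)
qed

lemma mean_dim_est_eq:
  "(\<Sum>T\<in>assignments. dim_est N K KT (assign T) (Y (assign T))) / real (card assignments)
     = (1 / real N) * (\<Sum>i<N. arm_mean i 1 (\<lambda>T. Y (assign T) i) - arm_mean i (-1) (\<lambda>T. Y (assign T) i))"
proof -
  define NT where "NT = real N * real KT / real K"
  define NC where "NC = real N - NT"
  have dim: "dim_est N K KT (assign T) (Y (assign T))
      = (\<Sum>i<N. (if assign T i = 1 then Y (assign T) i / NT else 0)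
                 - (if assign T i = -1 then Y (assign T) i / NC else 0))" for T
    unfolding dim_est_def Let_def NT_def[symmetric] NC_def[symmetric] sum_subtractf
    by (simp add: sum_divide_distrib sum.If_cases Int_def)
  have "(\<Sum>T\<in>assignments. dim_est N K KT (assign T) (Y (assign T)))
      = (\<Sum>i<N. (\<Sum>T\<in>arm i 1. Y (assign T) i) / NT - (\<Sum>T\<in>arm i (-1). Y (assign T) i) / NC)"
    unfolding dim sum_subtractf
    by (subst (1 2) sum.swap) (simp add: sum_assignments_filter sum_divide_distrib)
  also have "\<dots> = (\<Sum>i<N. real (card assignments) * arm_mean i 1 (\<lambda>T. Y (assign T) i) / real N
                       - real (card assignments) * arm_mean i (-1) (\<lambda>T. Y (assign T) i) / real N)"
    unfolding NT_def NC_def by (intro sum.cong refl) (simp only: lessThan_iff arm_sum_div_group_size)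
  also have "\<dots> = real (card assignments) * ((1 / real N)
      * (\<Sum>i<N. arm_mean i 1 (\<lambda>T. Y (assign T) i) - arm_mean i (-1) (\<lambda>T. Y (assign T) i)))"
    by (simp add: sum_distrib_left sum_subtractf sum_divide_distrib algebra_simps)
  finally show ?thesis
    using card_assignments treated_less by simp
qed

lemma expected_dim_minus_tau_star:
  "expected_dim w N M K KT C g - tau_star N g
     = (1 / real N) * (\<Sum>i<N. arm_mean i 1 (\<lambda>T. g i 1 (exposure w N M (assign T) i) - g i 1 1)
                              - arm_mean i (-1) (\<lambda>T. g i (-1) (exposure w N M (assign T) i) - g i (-1) (-1)))"
proof -
  have outcomes: "arm_mean i z (\<lambda>T. outcomes w N M g (assign T) i)
      = arm_mean i z (\<lambda>T. g i z (exposure w N M (assign T) i))" for i z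
    unfolding arm_mean_def outcomes_def by (intro arg_cong2[where f="(/)"] sum.cong) (auto simp: arm_def)
  have "expected_dim w N M K KT C g - tau_star N g
      = (1 / real N) * (\<Sum>i<N. (arm_mean i 1 (\<lambda>T. g i 1 (exposure w N M (assign T) i))
                              - arm_mean i (-1) (\<lambda>T. g i (-1) (exposure w N M (assign T) i)))
                              - (g i 1 1 - g i (-1) (-1)))"
    using mean_dim_est_eq[of "outcomes w N M g"]
    unfolding expected_dim_def assignments_def[symmetric] outcomes tau_star_def
    by (simp add: sum_subtractf right_diff_distrib)
  also have "\<dots> = (1 / real N) * (\<Sum>i<N. arm_mean i 1 (\<lambda>T. g i 1 (exposure w N M (assign T) i) - g i 1 1)
                              - arm_mean i (-1) (\<lambda>T. g i (-1) (exposure w N M (assign T) i) - g i (-1) (-1)))"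
    by (intro arg_cong[where f="(*) _"] sum.cong refl) (simp add: arm_mean_const_diff)
  finally show ?thesis .
qed

lemma arm_mean_lipschitz_le:
  assumes i: "i < N" and z: "z \<in> {-1, 1}" and lip: "L-lipschitz_on {-1..1} f"
  shows "\<bar>arm_mean i z (\<lambda>T. f (exposure w N M (assign T) i) - f z)\<bar>
       \<le> L * arm_mean i z (\<lambda>T. 1 - z * exposure w N M (assign T) i)"
proof -
  have "\<bar>f (exposure w N M (assign T) i) - f z\<bar> \<le> L * (1 - z * exposure w N M (assign T) i)" for T
  proof -
    have e: "exposure w N M (assign T) i \<in> {-1..1}"
      using exposure_mem_interval[OF weights_nonneg i sum_exposure_weight] unit_weights_pos
        interference_weights_pos i by (simp add: assign_def)
    have "dist (f (exposure w N M (assign T) i)) (f z) \<le> L * dist (exposure w N M (assign T) i) z"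
      using z by (intro lipschitz_onD[OF lip e]) auto
    then show ?thesis
      using abs_diff_sign[OF z e] by (simp add: dist_real_def)
  qed
  then have "\<bar>arm_mean i z (\<lambda>T. f (exposure w N M (assign T) i) - f z)\<bar>
      \<le> arm_mean i z (\<lambda>T. L * (1 - z * exposure w N M (assign T) i))"
    by (intro order.trans[OF arm_mean_abs_le arm_mean_mono])
  then show ?thesis unfolding arm_mean_scale .
qed

lemma outside_weight_nonneg: "i < N \<Longrightarrow> 0 \<le> outside_weight i"
  unfolding outside_weight_def using exposure_weight_nonneg[OF weights_nonneg] by (intro sum_nonneg) auto

lemma H_eq_sum_outside_weight: "H w N M C = (\<Sum>i<N. outside_weight i)"
  unfolding H_def outside_weight_def exposure_weight_def ..

lemma bias_le:
  assumes "lip_family N L g"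
  shows "bias w N M K KT C g \<le> 2 / real N * (real K / (real K - 1)) * L * H w N M C"
proof -
  let ?e = "\<lambda>T i. exposure w N M (assign T) i"
  have unit: "\<bar>arm_mean i 1 (\<lambda>T. g i 1 (?e T i) - g i 1 1) - arm_mean i (-1) (\<lambda>T. g i (-1) (?e T i) - g i (-1) (-1))\<bar>
      \<le> 2 * (real K / (real K - 1)) * L * outside_weight i" if i: "i < N" for i
  proof -
    have "L-lipschitz_on {-1..1} (g i z)" if "z \<in> {-1, 1}" for z
      using assms i that unfolding lip_family_def by blast
    then have "\<bar>arm_mean i 1 (\<lambda>T. g i 1 (?e T i) - g i 1 1) - arm_mean i (-1) (\<lambda>T. g i (-1) (?e T i) - g i (-1) (-1))\<bar>
        \<le> L * arm_mean i 1 (\<lambda>T. 1 - ?e T i) + L * arm_mean i (-1) (\<lambda>T. 1 + ?e T i)"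
      using arm_mean_lipschitz_le[OF i, of 1 L "g i 1"] arm_mean_lipschitz_le[OF i, of "-1" L "g i (-1)"]
      by (simp add: abs_triangle_ineq4[THEN order.trans])
    also have "\<dots> = 2 * (real K / (real K - 1)) * L * outside_weight i"
      using arm_mean_sign_gap_sum[OF i] by (simp add: algebra_simps flip: distrib_left)
    finally show ?thesis .
  qed
  have "bias w N M K KT C g
      = (1 / real N) * \<bar>\<Sum>i<N. arm_mean i 1 (\<lambda>T. g i 1 (?e T i) - g i 1 1)
                               - arm_mean i (-1) (\<lambda>T. g i (-1) (?e T i) - g i (-1) (-1))\<bar>"
    unfolding bias_def expected_dim_minus_tau_star by (simp add: abs_mult)
  also have "\<dots> \<le> (1 / real N) * (\<Sum>i<N. \<bar>arm_mean i 1 (\<lambda>T. g i 1 (?e T i) - g i 1 1)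
                               - arm_mean i (-1) (\<lambda>T. g i (-1) (?e T i) - g i (-1) (-1))\<bar>)"
    by (intro mult_left_mono sum_abs) auto
  also have "\<dots> \<le> (1 / real N) * (\<Sum>i<N. 2 * (real K / (real K - 1)) * L * outside_weight i)"
    using unit by (intro mult_left_mono sum_mono) auto
  finally show ?thesis
    unfolding H_eq_sum_outside_weight by (simp add: sum_distrib_left)
qed

lemma bias_linear:
  assumes "0 \<le> L"
  shows "bias w N M K KT C (\<lambda>i z e. L * e) = 2 / real N * (real K / (real K - 1)) * L * H w N M C"
proof -
  let ?e = "\<lambda>T i. exposure w N M (assign T) i"
  have unit: "arm_mean i 1 (\<lambda>T. L * ?e T i - L * 1) - arm_mean i (-1) (\<lambda>T. L * ?e T i - L * (-1))
      = 2 * (real K / (real K - 1)) * L * (- outside_weight i)" if i: "i < N" for i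
  proof -
    have "arm_mean i 1 (\<lambda>T. L * ?e T i - L * 1) = - L * arm_mean i 1 (\<lambda>T. 1 - ?e T i)"
      by (simp add: algebra_simps flip: arm_mean_scale)
    moreover have "arm_mean i (-1) (\<lambda>T. L * ?e T i - L * (-1)) = L * arm_mean i (-1) (\<lambda>T. 1 + ?e T i)"
      by (simp add: algebra_simps flip: arm_mean_scale)
    ultimately show ?thesis
      using arm_mean_sign_gap_sum[OF i] by (simp add: algebra_simps flip: distrib_left)
  qed
  have "expected_dim w N M K KT C (\<lambda>i z e. L * e) - tau_star N (\<lambda>i z e. L * e)
      = - (2 / real N * (real K / (real K - 1)) * L * H w N M C)"
    unfolding expected_dim_minus_tau_star H_eq_sum_outside_weight
    by (subst sum.cong[OF refl unit]) (simp_all add: sum_negf sum_distrib_left)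
  moreover have "0 \<le> H w N M C"
    unfolding H_eq_sum_outside_weight by (intro sum_nonneg outside_weight_nonneg) simp
  ultimately show ?thesis
    unfolding bias_def using assms treated_less by simp
qed

lemma worst_bias_eq:
  assumes "0 \<le> L"
  shows "worst_bias w N M K KT L C = 2 / real N * (real K / (real K - 1)) * L * H w N M C"
  unfolding worst_bias_def
proof (rule cSup_eq_maximum)
  show "2 / real N * (real K / (real K - 1)) * L * H w N M C \<in> bias w N M K KT C ` {g. lip_family N L g}"
    using bias_linear[OF assms] lip_family_linear[OF assms] by (intro image_eqI[of _ _ "\<lambda>i z e. L * e"]) auto
qed (use bias_le in auto)

end

theorem lemma3:
  fixes w :: "nat \<Rightarrow> nat \<Rightarrow> real" and N M K KT :: nat and L :: real
  assumes "0 < N" and "2 \<le> K" and "K dvd N" and "0 < KT" and "KT < K"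
    and "\<forall>i<N. \<forall>s<M. 0 \<le> w i s"
    and "\<forall>i<N. (\<Sum>s<M. w i s) > 0"
    and "\<forall>s<M. (\<Sum>i<N. w i s) > 0"
    and "0 < L"
  shows "(\<forall>C g. balanced_partition N K C \<and> lip_family N L g \<longrightarrow>
             bias w N M K KT C g \<le> 2 / real N * (real K / (real K - 1)) * L * H w N M C)
       \<and> (\<forall>C. balanced_partition N K C \<longrightarrow>
             lip_family N L (\<lambda>i z e. L * e) \<and>
             bias w N M K KT C (\<lambda>i z e. L * e) = 2 / real N * (real K / (real K - 1)) * L * H w N M C)
       \<and> {C. balanced_partition N K C \<and>
             (\<forall>C'. balanced_partition N K C' \<longrightarrow> worst_bias w N M K KT L C \<le> worst_bias w N M K KT L C')}
         = {C. balanced_partition N K C \<and>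
             (\<forall>C'. balanced_partition N K C' \<longrightarrow> H w N M C \<le> H w N M C')}"
proof -
  have design: "cluster_design w N M K KT C" if "balanced_partition N K C" for C
    using that assms(4-8) unfolding balanced_partition_def by unfold_locales auto
  define c where "c = 2 / real N * (real K / (real K - 1)) * L"
  have worst: "worst_bias w N M K KT L C = c * H w N M C" if "balanced_partition N K C" for C
    unfolding c_def using cluster_design.worst_bias_eq[OF design[OF that]] assms(9) by simp
  have "0 < c" unfolding c_def using assms(1,2,9) by simp
  then have "worst_bias w N M K KT L C \<le> worst_bias w N M K KT L C' \<longleftrightarrow> H w N M C \<le> H w N M C'"
    if "balanced_partition N K C" "balanced_partition N K C'" for C C'
    unfolding worst[OF that(1)] worst[OF that(2)] by (rule mult_le_cancel_left_pos)
  then show ?thesis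
    using cluster_design.bias_le[OF design] cluster_design.bias_linear[OF design] assms(9)
      lip_family_linear[of L N] by auto
qed

end
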